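(* Let $X$, $Y$, $(Z,d)$ be metric spaces, $1\le\alpha<\omega_1$, and let $f\colon X\times Y\to Z$ satisfy: (1) the family $\{f^x:x\in X\}\subseteq Z^Y$ has (PECP); (2) for every $y\in Y$ the section $f_y\colon X\to Z$ is of Borel class $\alpha$. Then $f$ is of Borel class $\alpha$.
   Context: For $x\in X$, $y\in Y$: $f^x\colon Y\to Z$, $f^x(y)=f(x,y)$ and $f_y\colon X\to Z$, $f_y(x)=f(x,y)$. A family $\mathscr F\subseteq Z^Y$ has (PECP) if for every nonempty closed $F\subseteq Y$ there is a point $y_0\in F$ such that for every $\varepsilon>0$ there is a neighborhood $U$ of $y_0$ with $d(g(y),g(y_0))<\varepsilon$ for all $y\in U\cap F$ and all $g\in\mathscr F$. In a metric space, sets of additive class $0$ are the open sets, of multiplicative class $0$ the closed sets; for $\alpha\ge1$, sets of additive class $\alpha$ are countable unions of sets of multiplicative classes $<\alpha$, and multiplicative class $\alpha$ sets are complements of additive class $\alpha$ sets. A function between metric spaces is of Borel class $\alpha$ if the preimage of every open set is of additive class $\alpha$. *)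

theory Defs
  imports "HOL-Analysis.Analysis"
begin

text \<open>Countable ordinals are represented by well-orders r (relations in the sense of
  BNF_Wellorder_Relation) with countable field; the ordinal is the order type of r.
  An element i of Field r stands for the ordinal = order type of the strict initial
  segment below i.\<close>

text \<open>Sets of additive class (order type of the segment below i), for i in Field r,
  by well-founded recursion over the strict part of r:
  class 0 = open sets; class beta >= 1 = countable unions of sets of
  multiplicative class < beta, multiplicative class = complement of additive class.\<close>
definition add_class_at :: "'i rel \<Rightarrow> 'i \<Rightarrow> ('a::topological_space) set set" where
  "add_class_at r = wfrec (r - Id) (\<lambda>AC i.
     if (\<forall>j. (j, i) \<notin> r - Id) then {A. open A}
     else {A. \<exists>F::nat \<Rightarrow> 'a set. A = \<Union>(range F) \<and>
                 (\<forall>n. \<exists>j. (j, i) \<in> r - Id \<and> - F n \<in> AC j)})"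

definition additive_class :: "'i rel \<Rightarrow> ('a::topological_space) set \<Rightarrow> bool" where
  "additive_class r A \<longleftrightarrow>
     (if Field r = {} then open A
      else (\<exists>F::nat \<Rightarrow> 'a set. A = \<Union>(range F) \<and>
              (\<forall>n. \<exists>j \<in> Field r. - F n \<in> add_class_at r j)))"

definition multiplicative_class :: "'i rel \<Rightarrow> ('a::topological_space) set \<Rightarrow> bool" where
  "multiplicative_class r A \<longleftrightarrow> additive_class r (- A)"

definition borel_class :: "'i rel \<Rightarrow> ('a::topological_space \<Rightarrow> 'b::topological_space) \<Rightarrow> bool" where
  "borel_class r f \<longleftrightarrow> (\<forall>U. open U \<longrightarrow> additive_class r (f -` U))"

definition PECP :: "('b::metric_space \<Rightarrow> 'c::metric_space) set \<Rightarrow> bool" where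
  "PECP \<F> \<longleftrightarrow> (\<forall>F. closed F \<and> F \<noteq> {} \<longrightarrow>
     (\<exists>y0\<in>F. \<forall>\<epsilon>>0. \<exists>U. open U \<and> y0 \<in> U \<and>
        (\<forall>y\<in>U \<inter> F. \<forall>g\<in>\<F>. dist (g y) (g y0) < \<epsilon>)))"

end

theory Submission
  imports Defs
begin

text \<open>Fix an open set V and let rho z be the distance from z to the complement of V. For
  every eps > 0, (PECP) lets us exhaust Y transfinitely by open sets on whose new parts all the maps
  y \<mapsto> f (x, y) oscillate by less than eps. Shrinking the new parts away from the boundary gives
  closed sets D i k, uniformly (1/(k+1))-separated in i and covering Y, with points y i such that
  f (x, y) is eps-close to f (x, y i) on X \<times> D i k. Hence the preimage of V is the countable
  union, over eps = 1/(n+1) and k, of the unions over i of the rectangles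
  {x. eps < rho (f (x, y i))} \<times> D i k, whose first factors have additive class alpha because
  the sections f_y do. The key fact is that each additive class is closed under unions of
  uniformly separated families; it is proved by induction on the class, together with the dual
  statement for complements of multiplicative sets.\<close>

abbreviation sigma_class :: "'i rel \<Rightarrow> 'i set \<Rightarrow> 'a::topological_space set \<Rightarrow> bool" where
  "sigma_class r S \<equiv> countable union_of (\<lambda>B. \<exists>j\<in>S. - B \<in> add_class_at r j)"

lemma add_class_at_unfold:
  assumes "Well_order r"
  shows "add_class_at r i = (if underS r i = {} then {A. open A} else
           {A. \<exists>F::nat \<Rightarrow> 'a::topological_space set. A = \<Union>(range F) \<and>
                 (\<forall>n. \<exists>j\<in>underS r i. - F n \<in> add_class_at r j)})"
proof -
  have "wf (r - Id)"
    using assms by (simp add: well_order_on_def)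
  then have "add_class_at r i = (if \<forall>j. (j, i) \<notin> r - Id then {A. open A} else
           {A. \<exists>F::nat \<Rightarrow> 'a set. A = \<Union>(range F) \<and>
                 (\<forall>n. \<exists>j. (j, i) \<in> r - Id \<and> - F n \<in> cut (add_class_at r) (r - Id) i j)})"
    unfolding add_class_at_def by (subst wfrec) simp_all
  moreover have "(\<forall>j. (j, i) \<notin> r - Id) \<longleftrightarrow> underS r i = {}"
    by (auto simp: underS_def)
  moreover have "(\<exists>j. (j, i) \<in> r - Id \<and> B \<in> cut (add_class_at r) (r - Id) i j) \<longleftrightarrow>
      (\<exists>j\<in>underS r i. B \<in> add_class_at r j)" for B :: "'a set"
    by (auto simp: underS_def cut_apply)
  ultimately show ?thesis
    by presburger
qed

lemma add_class_at_base:
  assumes "Well_order r" and "underS r i = {}"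
  shows "A \<in> add_class_at r i \<longleftrightarrow> open A"
  using assms by (subst add_class_at_unfold) auto

lemma open_eq_Union_closed:
  fixes A :: "'a::metric_space set"
  assumes "open A"
  obtains K where "\<And>n::nat. closed (K n)" "A = \<Union>(range K)"
  using open_imp_fsigma_in[OF metrizable_space_euclidean, of A] assms
  by (auto simp: fsigma_in_def countable_union_of_explicit)

lemma add_class_at_open:
  fixes A :: "'a::metric_space set"
  assumes r: "Well_order r" and "open A"
  shows "A \<in> add_class_at r i"
proof -
  have "wf (r - Id)"
    using r by (simp add: well_order_on_def)
  then show ?thesis
    using \<open>open A\<close>
  proof (induction i arbitrary: A rule: wf_induct_rule)
    case (less i)
    obtain K where K: "\<And>n::nat. closed (K n)" "A = \<Union>(range K)"
      using open_eq_Union_closed[OF less.prems] by blast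
    show ?case
    proof (cases "underS r i = {}")
      case True
      then show ?thesis
        using less.prems by (simp add: add_class_at_base[OF r])
    next
      case False
      then obtain j where "j \<in> underS r i"
        by blast
      moreover have "- K n \<in> add_class_at r j" for n
        using less.IH[of j "- K n"] \<open>j \<in> underS r i\<close> K(1) by (auto simp: underS_def)
      ultimately have "\<exists>F::nat \<Rightarrow> 'a set. A = \<Union>(range F) \<and> (\<forall>n. \<exists>j\<in>underS r i. - F n \<in> add_class_at r j)"
        using K(2) by blast
      then show ?thesis
        using False by (subst add_class_at_unfold[OF r]) simp
    qed
  qed
qed

lemma sigma_class_explicit:
  fixes A :: "'a::metric_space set"
  assumes r: "Well_order r" and "S \<noteq> {}"
  shows "sigma_class r S A \<longleftrightarrow>
           (\<exists>F::nat \<Rightarrow> 'a set. A = \<Union>(range F) \<and> (\<forall>n. \<exists>j\<in>S. - F n \<in> add_class_at r j))"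
proof -
  have P0: "\<exists>j\<in>S. - {} \<in> (add_class_at r j :: 'a set set)"
    using assms add_class_at_open[OF r] by auto
  show ?thesis
    unfolding countable_union_of_explicit[where P="\<lambda>B. \<exists>j\<in>S. - B \<in> add_class_at r j", OF P0]
    by blast
qed

lemma add_class_at_iff_sigma_class:
  fixes A :: "'a::metric_space set"
  assumes r: "Well_order r" and "underS r i \<noteq> {}"
  shows "A \<in> add_class_at r i \<longleftrightarrow> sigma_class r (underS r i) A"
  using assms by (subst add_class_at_unfold[OF r]) (simp add: sigma_class_explicit[OF r])

lemma additive_class_iff_sigma_class:
  fixes A :: "'a::metric_space set"
  assumes r: "Well_order r" and "Field r \<noteq> {}"
  shows "additive_class r A \<longleftrightarrow> sigma_class r (Field r) A"
  using assms by (simp add: additive_class_def sigma_class_explicit[OF r])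

lemma sigma_class_closed:
  fixes K :: "'a::metric_space set"
  assumes "Well_order r" "S \<noteq> {}" "closed K"
  shows "sigma_class r S K"
  using assms add_class_at_open[of r "- K"] by (intro countable_union_of_inc) auto

lemma sigma_class_open:
  fixes A :: "'a::metric_space set"
  assumes "Well_order r" "S \<noteq> {}" "open A"
  shows "sigma_class r S A"
proof -
  obtain K where K: "\<And>n::nat. closed (K n)" "A = \<Union>(range K)"
    using open_eq_Union_closed[OF \<open>open A\<close>] by blast
  show ?thesis
    unfolding K(2) using assms K(1)
    by (intro countable_union_of_UN[OF countableI_type] sigma_class_closed)
qed

lemma add_class_at_Un_open:
  fixes A :: "'a::metric_space set"
  assumes r: "Well_order r" and "A \<in> add_class_at r i" "open U"
  shows "A \<union> U \<in> add_class_at r i"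
proof (cases "underS r i = {}")
  case True
  then show ?thesis
    using assms by (simp add: add_class_at_base[OF r] open_Un)
next
  case False
  have "sigma_class r (underS r i) (A \<union> U)"
    using assms sigma_class_open[OF r False]
    by (intro countable_union_of_Un) (simp_all add: add_class_at_iff_sigma_class[OF r False])
  then show ?thesis
    by (simp add: add_class_at_iff_sigma_class[OF r False])
qed

lemma sigma_class_Int_closed:
  fixes A :: "'a::metric_space set"
  assumes r: "Well_order r" and A: "sigma_class r S A" and "closed K"
  shows "sigma_class r S (A \<inter> K)"
proof -
  obtain \<U> where \<U>: "countable \<U>" "\<And>U. U \<in> \<U> \<Longrightarrow> \<exists>j\<in>S. - U \<in> add_class_at r j" "A = \<Union>\<U>"
    using A unfolding union_of_def by auto
  have "\<exists>j\<in>S. - (U \<inter> K) \<in> add_class_at r j" if "U \<in> \<U>" for U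
    using \<U>(2)[OF that] add_class_at_Un_open[OF r _ open_Compl[OF \<open>closed K\<close>]] by auto
  then have "sigma_class r S (\<Union>U\<in>\<U>. U \<inter> K)"
    by (intro countable_union_of_UN \<U>(1) countable_union_of_inc)
  then show ?thesis
    by (simp add: \<U>(3) Int_Union2 Int_commute)
qed

lemma sigma_class_Int_open:
  fixes A :: "'a::metric_space set"
  assumes r: "Well_order r" and A: "sigma_class r S A" and "open W"
  shows "sigma_class r S (A \<inter> W)"
proof -
  obtain K where K: "\<And>n::nat. closed (K n)" "W = \<Union>(range K)"
    using open_eq_Union_closed[OF \<open>open W\<close>] by blast
  show ?thesis
    unfolding K(2) Int_UN_distrib
    by (intro countable_union_of_UN[OF countableI_type] sigma_class_Int_closed[OF r A K(1)])
qed

lemma add_class_at_Int_open: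
  fixes A :: "'a::metric_space set"
  assumes r: "Well_order r" and "A \<in> add_class_at r i" "open W"
  shows "A \<inter> W \<in> add_class_at r i"
proof (cases "underS r i = {}")
  case True
  then show ?thesis
    using assms by (simp add: add_class_at_base[OF r] open_Int)
next
  case False
  then show ?thesis
    using assms sigma_class_Int_open[OF r]
    by (simp add: add_class_at_iff_sigma_class[OF r False])
qed

lemma sigma_class_vimage:
  assumes "sigma_class r S A"
    and "\<And>j B. j \<in> S \<Longrightarrow> B \<in> add_class_at r j \<Longrightarrow> g -` B \<in> add_class_at r j"
  shows "sigma_class r S (g -` A)"
proof -
  obtain \<U> where \<U>: "countable \<U>" "\<And>U. U \<in> \<U> \<Longrightarrow> \<exists>j\<in>S. - U \<in> add_class_at r j" "A = \<Union>\<U>"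
    using assms(1) unfolding union_of_def by auto
  have "sigma_class r S (\<Union>U\<in>\<U>. g -` U)"
    using \<U>(2) assms(2) by (intro countable_union_of_UN \<U>(1) countable_union_of_inc)
      (metis vimage_Compl)
  then show ?thesis
    by (simp add: \<U>(3) vimage_Union)
qed

lemma add_class_at_vimage:
  fixes g :: "'a::metric_space \<Rightarrow> 'b::metric_space"
  assumes r: "Well_order r" and g: "continuous_on UNIV g" and "A \<in> add_class_at r i"
  shows "g -` A \<in> add_class_at r i"
proof -
  have "wf (r - Id)"
    using r by (simp add: well_order_on_def)
  then show ?thesis
    using \<open>A \<in> add_class_at r i\<close>
  proof (induction i arbitrary: A rule: wf_induct_rule)
    case (less i)
    show ?case
    proof (cases "underS r i = {}")
      case True
      then show ?thesis
        using less.prems g by (simp add: add_class_at_base[OF r] open_vimage)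
    next
      case False
      have "sigma_class r (underS r i) A"
        using less.prems by (simp add: add_class_at_iff_sigma_class[OF r False])
      then have "sigma_class r (underS r i) (g -` A)"
        by (rule sigma_class_vimage) (use less.IH in \<open>auto simp: underS_def\<close>)
      then show ?thesis
        by (simp add: add_class_at_iff_sigma_class[OF r False])
    qed
  qed
qed

definition uniformly_separated :: "real \<Rightarrow> ('k \<Rightarrow> 'a::metric_space set) \<Rightarrow> bool" where
  "uniformly_separated \<delta> M \<longleftrightarrow>
     (\<forall>\<xi> \<eta> s t. \<xi> \<noteq> \<eta> \<longrightarrow> s \<in> M \<xi> \<longrightarrow> t \<in> M \<eta> \<longrightarrow> \<delta> \<le> dist s t)"

lemma uniformly_separated_mono:
  "uniformly_separated \<delta> M \<Longrightarrow> (\<And>\<xi>. N \<xi> \<subseteq> M \<xi>) \<Longrightarrow> uniformly_separated \<delta> N"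
  unfolding uniformly_separated_def by blast

lemma uniformly_separated_index_eq:
  assumes "uniformly_separated \<delta> M" "s \<in> M \<xi>" "t \<in> M \<eta>" "dist s t < \<delta>"
  shows "\<xi> = \<eta>"
proof (rule ccontr)
  assume "\<xi> \<noteq> \<eta>"
  then have "\<delta> \<le> dist s t"
    using assms(1-3) unfolding uniformly_separated_def by blast
  with assms(4) show False
    by simp
qed

lemma closed_Union_uniformly_separated:
  fixes M :: "'k \<Rightarrow> 'a::metric_space set"
  assumes "\<delta> > 0" "uniformly_separated \<delta> M" "\<And>\<xi>. closed (M \<xi>)"
  shows "closed (\<Union>(range M))"
proof -
  have "finite {U \<in> range M. U \<inter> ball x (\<delta>/2) \<noteq> {}}" for x
  proof (cases "\<exists>\<xi>. M \<xi> \<inter> ball x (\<delta>/2) \<noteq> {}")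
    case True
    then obtain \<xi> s where s: "s \<in> M \<xi>" "dist x s < \<delta>/2"
      by auto
    have "M \<eta> = M \<xi>" if "t \<in> M \<eta>" "dist x t < \<delta>/2" for \<eta> t
    proof -
      have "dist t s < \<delta>"
        using dist_triangle_half_r[OF that(2) s(2)] .
      then show ?thesis
        using uniformly_separated_index_eq[OF assms(2) that(1) s(1)] by simp
    qed
    then have "{U \<in> range M. U \<inter> ball x (\<delta>/2) \<noteq> {}} \<subseteq> {M \<xi>}"
      by auto
    then show ?thesis
      using finite_subset by blast
  next
    case False
    then have "{U \<in> range M. U \<inter> ball x (\<delta>/2) \<noteq> {}} = {}"
      by auto
    then show ?thesis
      by (metis finite.emptyI)
  qed
  then have "\<exists>V. openin euclidean V \<and> x \<in> V \<and> finite {U \<in> range M. U \<inter> V \<noteq> {}}" for x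
    using \<open>\<delta> > 0\<close> by (intro exI[of _ "ball x (\<delta>/2)"]) auto
  then have "locally_finite_in euclidean (range M)"
    unfolding locally_finite_in_def by simp
  then show ?thesis
    using closedin_locally_finite_Union[of "range M" euclidean] assms(3) by auto
qed

lemma uniformly_separated_thickening:
  assumes "uniformly_separated \<delta> M"
  shows "uniformly_separated (\<delta>/3) (\<lambda>\<xi>. \<Union>s\<in>M \<xi>. ball s (\<delta>/3))"
  unfolding uniformly_separated_def
proof (intro allI impI)
  fix \<xi> \<eta> s' t'
  assume "\<xi> \<noteq> \<eta>" "s' \<in> (\<Union>s\<in>M \<xi>. ball s (\<delta>/3))" "t' \<in> (\<Union>t\<in>M \<eta>. ball t (\<delta>/3))"
  then obtain s t where "s \<in> M \<xi>" "t \<in> M \<eta>" "dist s s' < \<delta>/3" "dist t t' < \<delta>/3"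
    by auto
  moreover have "\<delta> \<le> dist s t"
    using assms \<open>\<xi> \<noteq> \<eta>\<close> \<open>s \<in> M \<xi>\<close> \<open>t \<in> M \<eta>\<close> unfolding uniformly_separated_def by blast
  moreover have "dist s t \<le> dist s s' + dist s' t' + dist t t'"
    using dist_triangle[of s t s'] dist_triangle[of s' t t'] dist_commute[of t t'] by linarith
  ultimately show "\<delta>/3 \<le> dist s' t'"
    by linarith
qed

lemma Compl_Union_eq_disjoint_cover:
  assumes "\<And>\<xi>. M \<xi> \<subseteq> W \<xi>" "\<And>\<xi> \<eta> t. t \<in> W \<xi> \<Longrightarrow> t \<in> W \<eta> \<Longrightarrow> \<xi> = \<eta>"
  shows "- \<Union>(range M) = - \<Union>(range W) \<union> (\<Union>\<xi>. W \<xi> \<inter> - M \<xi>)"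
proof (intro set_eqI iffI)
  fix t
  assume "t \<in> - \<Union>(range M)"
  then show "t \<in> - \<Union>(range W) \<union> (\<Union>\<xi>. W \<xi> \<inter> - M \<xi>)"
    by blast
next
  fix t
  assume "t \<in> - \<Union>(range W) \<union> (\<Union>\<xi>. W \<xi> \<inter> - M \<xi>)"
  then consider "t \<in> - \<Union>(range W)" | \<xi> where "t \<in> W \<xi>" "t \<notin> M \<xi>"
    by blast
  then show "t \<in> - \<Union>(range M)"
  proof cases
    case 1
    then show ?thesis
      using assms(1) by blast
  next
    case (2 \<xi>)
    have "t \<notin> M \<eta>" for \<eta>
    proof
      assume "t \<in> M \<eta>"
      then have "\<xi> = \<eta>"
        using assms 2(1) by blast
      with 2(2) \<open>t \<in> M \<eta>\<close> show False
        by simp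
    qed
    then show ?thesis
      by blast
  qed
qed

text \<open>The \<delta>/3-thickenings W of the members are disjoint and open, so the complement of the union
  is the closed set outside all W together with the uniformly separated union of the sets
  W \<xi> - M \<xi>, which have class j again.\<close>

lemma add_class_at_Compl_Union_separated:
  fixes M :: "'k \<Rightarrow> 'a::metric_space set"
  assumes r: "Well_order r"
    and closed_under: "\<And>\<delta>' (N::'k \<Rightarrow> 'a set). \<delta>' > 0 \<Longrightarrow> uniformly_separated \<delta>' N \<Longrightarrow>
                         (\<And>\<xi>. N \<xi> \<in> add_class_at r j) \<Longrightarrow> \<Union>(range N) \<in> add_class_at r j"
    and "\<delta> > 0" "uniformly_separated \<delta> M" "\<And>\<xi>. - M \<xi> \<in> add_class_at r j"
  shows "- \<Union>(range M) \<in> add_class_at r j"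
proof (cases "underS r j = {}")
  case True
  have "closed (M \<xi>)" for \<xi>
    using assms(5)[of \<xi>] by (simp add: add_class_at_base[OF r True] closed_open)
  then have "closed (\<Union>(range M))"
    by (rule closed_Union_uniformly_separated[OF assms(3,4)])
  then show ?thesis
    using open_Compl add_class_at_base[OF r True] by blast
next
  case False
  define W where "W \<xi> = (\<Union>s\<in>M \<xi>. ball s (\<delta>/3))" for \<xi>
  have W: "uniformly_separated (\<delta>/3) W"
    unfolding W_def by (rule uniformly_separated_thickening[OF assms(4)])
  have MW: "M \<xi> \<subseteq> W \<xi>" for \<xi>
    using \<open>\<delta> > 0\<close> by (force simp: W_def)
  have "\<xi> = \<eta>" if "t \<in> W \<xi>" "t \<in> W \<eta>" for t \<xi> \<eta>
    using uniformly_separated_index_eq[OF W that] \<open>\<delta> > 0\<close> by simp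
  with MW have eq: "- \<Union>(range M) = - \<Union>(range W) \<union> (\<Union>\<xi>. W \<xi> \<inter> - M \<xi>)"
    by (rule Compl_Union_eq_disjoint_cover)
  have U: "(\<Union>\<xi>. W \<xi> \<inter> - M \<xi>) \<in> add_class_at r j"
  proof (rule closed_under)
    show "uniformly_separated (\<delta>/3) (\<lambda>\<xi>. W \<xi> \<inter> - M \<xi>)"
      by (rule uniformly_separated_mono[OF W]) auto
    show "W \<xi> \<inter> - M \<xi> \<in> add_class_at r j" for \<xi>
      using add_class_at_Int_open[OF r assms(5), of "W \<xi>"] by (auto simp: W_def Int_commute)
  qed (use \<open>\<delta> > 0\<close> in simp)
  have "closed (- \<Union>(range W))"
    unfolding W_def by (intro closed_Compl open_UN ballI open_ball)
  then have "sigma_class r (underS r j) (- \<Union>(range W) \<union> (\<Union>\<xi>. W \<xi> \<inter> - M \<xi>))"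
    using U unfolding add_class_at_iff_sigma_class[OF r False]
    by (rule countable_union_of_Un[OF sigma_class_closed[OF r False]])
  then show ?thesis
    unfolding eq by (simp only: add_class_at_iff_sigma_class[OF r False])
qed

lemma sigma_class_Union_separated:
  fixes M :: "'k \<Rightarrow> 'a::metric_space set"
  assumes r: "Well_order r" and S: "countable S" "S \<noteq> {}"
    and mult: "\<And>j \<delta>' (N::'k \<Rightarrow> 'a set). j \<in> S \<Longrightarrow> \<delta>' > 0 \<Longrightarrow> uniformly_separated \<delta>' N \<Longrightarrow>
                 (\<And>\<xi>. - N \<xi> \<in> add_class_at r j) \<Longrightarrow> - \<Union>(range N) \<in> add_class_at r j"
    and "\<delta> > 0" "uniformly_separated \<delta> M" "\<And>\<xi>. sigma_class r S (M \<xi>)"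
  shows "sigma_class r S (\<Union>(range M))"
proof -
  have "\<forall>\<xi>. \<exists>G::nat \<Rightarrow> 'a set. M \<xi> = \<Union>(range G) \<and> (\<forall>n. \<exists>j\<in>S. - G n \<in> add_class_at r j)"
    using assms(7) sigma_class_explicit[OF r S(2)] by blast
  then obtain F :: "'k \<Rightarrow> nat \<Rightarrow> 'a set"
    where F: "\<And>\<xi>. M \<xi> = \<Union>(range (F \<xi>))" "\<And>\<xi> n. \<exists>j\<in>S. - F \<xi> n \<in> add_class_at r j"
    by metis
  define B where "B n j = (\<Union>\<xi>. if - F \<xi> n \<in> add_class_at r j then F \<xi> n else {})" for n j
  have "- B n j \<in> add_class_at r j" if "j \<in> S" for n j
    unfolding B_def
  proof (rule mult[OF that \<open>\<delta> > 0\<close>])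
    show "uniformly_separated \<delta> (\<lambda>\<xi>. if - F \<xi> n \<in> add_class_at r j then F \<xi> n else {})"
      by (rule uniformly_separated_mono[OF assms(6)]) (auto simp: F(1))
    have "(UNIV :: 'a set) \<in> add_class_at r j"
      by (rule add_class_at_open[OF r open_UNIV])
    then show "- (if - F \<xi> n \<in> add_class_at r j then F \<xi> n else {}) \<in> add_class_at r j" for \<xi>
      by simp
  qed
  then have "sigma_class r S (\<Union>n. \<Union>j\<in>S. B n j)"
    by (intro countable_union_of_UN countableI_type S(1) countable_union_of_inc) auto
  moreover have "\<Union>(range M) = (\<Union>n. \<Union>j\<in>S. B n j)"
  proof
    show "\<Union>(range M) \<subseteq> (\<Union>n. \<Union>j\<in>S. B n j)"
    proof
      fix x
      assume "x \<in> \<Union>(range M)"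
      then obtain \<xi> n where "x \<in> F \<xi> n"
        using F(1) by auto
      moreover obtain j where "j \<in> S" "- F \<xi> n \<in> add_class_at r j"
        using F(2) by blast
      ultimately show "x \<in> (\<Union>n. \<Union>j\<in>S. B n j)"
        unfolding B_def by force
    qed
    show "(\<Union>n. \<Union>j\<in>S. B n j) \<subseteq> \<Union>(range M)"
      using F(1) by (auto simp: B_def split: if_splits)
  qed
  ultimately show ?thesis
    by simp
qed

lemma add_class_at_Union_separated:
  fixes M :: "'k \<Rightarrow> 'a::metric_space set"
  assumes r: "Well_order r" and cf: "countable (Field r)"
    and "\<delta> > 0" "uniformly_separated \<delta> M" "\<And>\<xi>. M \<xi> \<in> add_class_at r i"
  shows "\<Union>(range M) \<in> add_class_at r i"
proof -
  have "wf (r - Id)"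
    using r by (simp add: well_order_on_def)
  then show ?thesis
    using assms(3-5)
  proof (induction i arbitrary: \<delta> M rule: wf_induct_rule)
    case (less i)
    show ?case
    proof (cases "underS r i = {}")
      case True
      have "open (M \<xi>)" for \<xi>
        using less.prems(3) by (simp add: add_class_at_base[OF r True])
      then show ?thesis
        by (simp add: add_class_at_base[OF r True] open_UN)
    next
      case False
      have S: "countable (underS r i)"
        using cf by (rule countable_subset[rotated]) (auto simp: underS_def Field_def)
      have "- \<Union>(range N) \<in> add_class_at r j"
        if "j \<in> underS r i" "\<delta>' > 0" "uniformly_separated \<delta>' N" "\<And>\<xi>. - N \<xi> \<in> add_class_at r j"
        for j \<delta>' and N :: "'k \<Rightarrow> 'a set"
        by (rule add_class_at_Compl_Union_separated[OF r _ that(2-4)])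
          (use less.IH that(1) in \<open>auto simp: underS_def\<close>)
      moreover have "sigma_class r (underS r i) (M \<xi>)" for \<xi>
        using less.prems(3) add_class_at_iff_sigma_class[OF r False] by blast
      ultimately have "sigma_class r (underS r i) (\<Union>(range M))"
        by (rule sigma_class_Union_separated[OF r S False _ less.prems(1,2)])
      then show ?thesis
        by (simp add: add_class_at_iff_sigma_class[OF r False])
    qed
  qed
qed

lemma additive_class_Union_separated:
  fixes M :: "'k \<Rightarrow> 'a::metric_space set"
  assumes r: "Well_order r" and cf: "countable (Field r)" and ne: "Field r \<noteq> {}"
    and "\<delta> > 0" "uniformly_separated \<delta> M" "\<And>\<xi>. additive_class r (M \<xi>)"
  shows "additive_class r (\<Union>(range M))"
  using assms(4-6) unfolding additive_class_iff_sigma_class[OF r ne]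
  by (intro sigma_class_Union_separated[OF r cf ne] add_class_at_Compl_Union_separated[OF r]
      add_class_at_Union_separated[OF r cf])

definition new_part :: "('i \<times> 'i) set \<Rightarrow> ('i \<Rightarrow> 'a set) \<Rightarrow> 'i \<Rightarrow> 'a set" where
  "new_part R U i = U i - (\<Union>j\<in>{j. (j, i) \<in> R}. U j)"

lemma new_part_disjoint:
  assumes "(i, j) \<in> R \<or> (j, i) \<in> R"
  shows "new_part R U i \<inter> new_part R U j = {}"
  using assms unfolding new_part_def by blast

lemma ex_new_part_empty:
  fixes U :: "'b set \<Rightarrow> 'b set"
  assumes total: "\<And>i j. i \<noteq> j \<Longrightarrow> (i, j) \<in> R \<or> (j, i) \<in> R"
  shows "\<exists>i. new_part R U i = {}"
proof (rule ccontr)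
  assume "\<nexists>i. new_part R U i = {}"
  then have "\<forall>i. \<exists>y. y \<in> new_part R U i"
    by blast
  from choice[OF this] obtain p where p: "\<And>i. p i \<in> new_part R U i"
    by blast
  have "inj p"
  proof (rule injI)
    fix i j
    assume "p i = p j"
    show "i = j"
    proof (rule ccontr)
      assume "i \<noteq> j"
      then have "new_part R U i \<inter> new_part R U j = {}"
        by (rule new_part_disjoint[OF total])
      with p[of i] p[of j] \<open>p i = p j\<close> show False
        by auto
    qed
  qed
  then have "surj (inv p)"
    by (rule inj_imp_surj_inv)
  then show False
    using Cantors_theorem[of "UNIV :: 'b set"] by (metis Pow_UNIV)
qed

lemma ex_wf_total:
  "\<exists>R :: ('a \<times> 'a) set. wf R \<and> (\<forall>i j. i \<noteq> j \<longrightarrow> (i, j) \<in> R \<or> (j, i) \<in> R)"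
proof -
  obtain Wo :: "'a rel" where Wo: "Well_order Wo" "Field Wo = UNIV"
    using well_ordering[where 'a = 'a] by blast
  have "wf (Wo - Id)"
    using Wo(1) by (simp add: well_order_on_def)
  moreover have "total_on UNIV Wo"
    using Wo by (simp add: well_order_on_def linear_order_on_def)
  ultimately show ?thesis
    by (intro exI[of _ "Wo - Id"]) (auto simp: total_on_def)
qed

lemma wfrec_Union_earlier:
  assumes "wf R"
  shows "\<exists>U :: 'i \<Rightarrow> 'a set. \<forall>i. U i = G (\<Union>j\<in>{j. (j, i) \<in> R}. U j)"
proof -
  define U where "U = wfrec R (\<lambda>U i. G (\<Union>j\<in>{j. (j, i) \<in> R}. U j))"
  have "U i = G (\<Union>j\<in>{j. (j, i) \<in> R}. U j)" for i
  proof -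
    have "U i = G (\<Union>j\<in>{j. (j, i) \<in> R}. cut U R i j)"
      unfolding U_def by (subst wfrec[OF assms]) simp
    also have "(\<Union>j\<in>{j. (j, i) \<in> R}. cut U R i j) = (\<Union>j\<in>{j. (j, i) \<in> R}. U j)"
      by (rule SUP_cong) (simp_all add: cut_apply)
    finally show ?thesis .
  qed
  then show ?thesis
    by blast
qed

text \<open>The exhaustion is indexed by a well-order of \<^typ>\<open>'b set\<close>, which by Cantor's theorem is
  long enough to use up the space.\<close>

lemma transfinite_open_exhaustion:
  fixes P :: "'b::topological_space set \<Rightarrow> bool"
  assumes pick: "\<And>F. closed F \<Longrightarrow> F \<noteq> {} \<Longrightarrow> \<exists>U. open U \<and> U \<inter> F \<noteq> {} \<and> P (U \<inter> F)"
  obtains R :: "('b set \<times> 'b set) set" and U :: "'b set \<Rightarrow> 'b set"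
  where "wf R" "\<And>i j. i \<noteq> j \<Longrightarrow> (i, j) \<in> R \<or> (j, i) \<in> R" "\<And>i. open (U i)"
    "\<And>i. new_part R U i \<noteq> {} \<Longrightarrow> P (new_part R U i)" "\<Union>(range U) = UNIV"
proof -
  obtain R :: "('b set \<times> 'b set) set"
    where wf: "wf R" and total: "\<And>i j. i \<noteq> j \<Longrightarrow> (i, j) \<in> R \<or> (j, i) \<in> R"
    using ex_wf_total[where 'a = "'b set"] by blast
  have "\<exists>V. open V \<and> (closed F \<and> F \<noteq> {} \<longrightarrow> V \<inter> F \<noteq> {} \<and> P (V \<inter> F))" for F
  proof (cases "closed F \<and> F \<noteq> {}")
    case True
    then show ?thesis
      using pick by blast
  next
    case False
    then show ?thesis
      by (intro exI[of _ "{}"]) auto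
  qed
  then have "\<forall>F. \<exists>V. open V \<and> (closed F \<and> F \<noteq> {} \<longrightarrow> V \<inter> F \<noteq> {} \<and> P (V \<inter> F))"
    by blast
  from choice[OF this] obtain pickU where pickU: "\<And>F. open (pickU F)"
    "\<And>F. closed F \<Longrightarrow> F \<noteq> {} \<Longrightarrow> pickU F \<inter> F \<noteq> {} \<and> P (pickU F \<inter> F)"
    by blast
  obtain U where U_eq: "\<And>i. U i = pickU (- (\<Union>j\<in>{j. (j, i) \<in> R}. U j))"
    using wfrec_Union_earlier[OF wf, of "\<lambda>A. pickU (- A)"] by blast
  have open_U: "open (U i)" for i
    using pickU(1) by (simp only: U_eq[of i])
  have new_part_eq: "new_part R U i = pickU (- (\<Union>j\<in>{j. (j, i) \<in> R}. U j)) \<inter> - (\<Union>j\<in>{j. (j, i) \<in> R}. U j)" for i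
    unfolding new_part_def by (simp only: U_eq[of i] Diff_eq)
  have closed_rest: "closed (- (\<Union>j\<in>{j. (j, i) \<in> R}. U j))" for i
    using open_U by (intro closed_Compl open_UN) auto
  have "P (new_part R U i)" if "new_part R U i \<noteq> {}" for i
    using that pickU(2)[OF closed_rest] unfolding new_part_eq by blast
  moreover have "\<Union>(range U) = UNIV"
  proof (rule ccontr)
    assume "\<Union>(range U) \<noteq> UNIV"
    then have "- (\<Union>j\<in>{j. (j, i) \<in> R}. U j) \<noteq> {}" for i
      by blast
    then have "new_part R U i \<noteq> {}" for i
      using pickU(2)[OF closed_rest] unfolding new_part_eq by blast
    then show False
      using ex_new_part_empty[OF total] by blast
  qed
  ultimately show ?thesis
    using that wf total open_U by blast
qed

lemma closed_Collect_ball_subset: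
  fixes U :: "'a::metric_space set"
  shows "closed {y. ball y e \<subseteq> U}"
proof -
  have "{y. ball y e \<subseteq> U} = - (\<Union>z\<in>- U. ball z e)"
    by (auto simp: dist_commute)
  then show ?thesis
    by (auto intro: closed_Compl)
qed

lemma closed_new_part_interior:
  fixes U :: "'i \<Rightarrow> 'a::metric_space set"
  assumes "e > 0" "\<And>j. open (U j)"
  shows "closed ({y. ball y e \<subseteq> U i} \<inter> new_part R U i)"
proof -
  have "{y. ball y e \<subseteq> U i} \<inter> new_part R U i = {y. ball y e \<subseteq> U i} - (\<Union>j\<in>{j. (j, i) \<in> R}. U j)"
    using \<open>e > 0\<close> by (auto simp: new_part_def)
  then show ?thesis
    using assms(2) by (simp add: closed_Diff closed_Collect_ball_subset open_UN)
qed

lemma uniformly_separated_new_part_interiors: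
  fixes U :: "'i \<Rightarrow> 'a::metric_space set"
  assumes total: "\<And>i j. i \<noteq> j \<Longrightarrow> (i, j) \<in> R \<or> (j, i) \<in> R"
  shows "uniformly_separated e (\<lambda>i. {y. ball y e \<subseteq> U i} \<inter> new_part R U i)"
  unfolding uniformly_separated_def
proof (intro allI impI)
  fix i j s t
  assume "i \<noteq> j" and s: "s \<in> {y. ball y e \<subseteq> U i} \<inter> new_part R U i"
    and t: "t \<in> {y. ball y e \<subseteq> U j} \<inter> new_part R U j"
  from total[OF \<open>i \<noteq> j\<close>] consider "(i, j) \<in> R" | "(j, i) \<in> R"
    by blast
  then show "e \<le> dist s t"
  proof cases
    case 1
    then have "t \<notin> ball s e"
      using s t by (auto simp: new_part_def)
    then show ?thesis
      by simp
  next
    case 2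
    then have "s \<notin> ball t e"
      using s t by (auto simp: new_part_def)
    then show ?thesis
      by (simp add: dist_commute)
  qed
qed

lemma new_part_interiors_cover:
  fixes U :: "'i \<Rightarrow> 'a::metric_space set"
  assumes "wf R" "\<And>i. open (U i)" "y \<in> \<Union>(range U)"
  shows "\<exists>i k. y \<in> {y. ball y (1 / Suc k) \<subseteq> U i} \<inter> new_part R U i"
proof -
  obtain i0 where "i0 \<in> {i. y \<in> U i}"
    using assms(3) by blast
  then obtain i where "i \<in> {i. y \<in> U i}" and min: "\<And>j. (j, i) \<in> R \<Longrightarrow> j \<notin> {i. y \<in> U i}"
    by (rule wfE_min[OF assms(1)]) (rule that)
  then have "y \<in> new_part R U i"
    by (auto simp: new_part_def)
  obtain e where "e > 0" "ball y e \<subseteq> U i"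
    using assms(2) \<open>i \<in> {i. y \<in> U i}\<close> open_contains_ball by blast
  moreover obtain k where "1 / Suc k < e"
    using nat_approx_posE[OF \<open>e > 0\<close>] by blast
  ultimately have "ball y (1 / Suc k) \<subseteq> U i"
    using subset_ball[of "1 / Suc k" e y] by simp
  with \<open>y \<in> new_part R U i\<close> show ?thesis
    by blast
qed

lemma PECP_small_oscillation:
  fixes \<F> :: "('b::metric_space \<Rightarrow> 'c::metric_space) set"
  assumes "PECP \<F>" "\<epsilon> > 0" "closed F" "F \<noteq> {}"
  shows "\<exists>U. open U \<and> U \<inter> F \<noteq> {} \<and> (\<forall>y\<in>U \<inter> F. \<forall>y'\<in>U \<inter> F. \<forall>g\<in>\<F>. dist (g y) (g y') < \<epsilon>)"
proof -
  from assms(1)[unfolded PECP_def, rule_format, OF conjI[OF assms(3,4)]] obtain z where "z \<in> F"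
    and z: "\<forall>e>0. \<exists>U. open U \<and> z \<in> U \<and> (\<forall>y\<in>U \<inter> F. \<forall>g\<in>\<F>. dist (g y) (g z) < e)" ..
  have "\<epsilon>/2 > 0"
    using \<open>\<epsilon> > 0\<close> by simp
  then obtain U where U: "open U" "z \<in> U" "\<forall>y\<in>U \<inter> F. \<forall>g\<in>\<F>. dist (g y) (g z) < \<epsilon>/2"
    using z by blast
  have "dist (g y) (g y') < \<epsilon>" if "y \<in> U \<inter> F" "y' \<in> U \<inter> F" "g \<in> \<F>" for y y' g
    using U(3) that by (intro dist_triangle_half_l[of "g y" "g z" \<epsilon> "g y'"]) auto
  with U(1,2) \<open>z \<in> F\<close> show ?thesis
    by blast
qed

lemma PECP_decomposition:
  fixes \<F> :: "('b::metric_space \<Rightarrow> 'c::metric_space) set"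
  assumes "PECP \<F>" "\<epsilon> > 0"
  obtains D :: "'b set \<Rightarrow> nat \<Rightarrow> 'b set" and y0 :: "'b set \<Rightarrow> 'b"
  where "\<And>i k. closed (D i k)" "\<And>k. uniformly_separated (1 / Suc k) (\<lambda>i. D i k)"
    "\<And>i k y g. y \<in> D i k \<Longrightarrow> g \<in> \<F> \<Longrightarrow> dist (g y) (g (y0 i)) < \<epsilon>"
    "\<And>y. \<exists>i k. y \<in> D i k"
proof -
  define small where "small A \<longleftrightarrow> (\<forall>y\<in>A. \<forall>y'\<in>A. \<forall>g\<in>\<F>. dist (g y) (g y') < \<epsilon>)" for A
  show ?thesis
  proof (rule transfinite_open_exhaustion[of small])
    show "\<exists>U. open U \<and> U \<inter> F \<noteq> {} \<and> small (U \<inter> F)" if "closed F" "F \<noteq> {}" for F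
      unfolding small_def by (rule PECP_small_oscillation[OF assms that])
  next
    fix R :: "('b set \<times> 'b set) set" and U :: "'b set \<Rightarrow> 'b set"
    assume R: "wf R" "\<And>i j. i \<noteq> j \<Longrightarrow> (i, j) \<in> R \<or> (j, i) \<in> R"
      and U: "\<And>i. open (U i)" "\<And>i. new_part R U i \<noteq> {} \<Longrightarrow> small (new_part R U i)"
        "\<Union>(range U) = UNIV"
    define y0 where "y0 i = (SOME y. y \<in> new_part R U i)" for i
    define D where "D i k = {y. ball y (1 / Suc k) \<subseteq> U i} \<inter> new_part R U i" for i k
    show ?thesis
    proof (rule that[of D y0])
      show "closed (D i k)" for i k
        unfolding D_def by (rule closed_new_part_interior[OF _ U(1)]) simp
      show "uniformly_separated (1 / Suc k) (\<lambda>i. D i k)" for k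
        unfolding D_def by (rule uniformly_separated_new_part_interiors[OF R(2)])
      show "\<exists>i k. y \<in> D i k" for y
        unfolding D_def by (rule new_part_interiors_cover[OF R(1) U(1)]) (simp add: U(3))
      show "dist (g y) (g (y0 i)) < \<epsilon>" if "y \<in> D i k" "g \<in> \<F>" for i k y g
      proof -
        have "y \<in> new_part R U i"
          using that(1) by (simp add: D_def)
        then have "y0 i \<in> new_part R U i" and "small (new_part R U i)"
          using U(2) unfolding y0_def by (auto intro: someI)
        with \<open>y \<in> new_part R U i\<close> that(2) show ?thesis
          unfolding small_def by simp
      qed
    qed
  qed
qed

lemma PECP_sections_decomposition:
  fixes f :: "'a \<times> 'b::metric_space \<Rightarrow> 'c::metric_space"
  assumes "PECP {(\<lambda>y. f (x, y)) | x. True}"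
  obtains D :: "nat \<Rightarrow> 'b set \<Rightarrow> nat \<Rightarrow> 'b set" and y0 :: "nat \<Rightarrow> 'b set \<Rightarrow> 'b"
  where "\<And>n i k. closed (D n i k)" "\<And>n k. uniformly_separated (1 / Suc k) (\<lambda>i. D n i k)"
    "\<And>n i k x y. y \<in> D n i k \<Longrightarrow> dist (f (x, y)) (f (x, y0 n i)) < 1 / Suc n"
    "\<And>n y. \<exists>i k. y \<in> D n i k"
proof -
  have "\<exists>p :: ('b set \<Rightarrow> nat \<Rightarrow> 'b set) \<times> ('b set \<Rightarrow> 'b).
          (\<forall>i k. closed (fst p i k)) \<and> (\<forall>k. uniformly_separated (1 / Suc k) (\<lambda>i. fst p i k)) \<and>
          (\<forall>i k x y. y \<in> fst p i k \<longrightarrow> dist (f (x, y)) (f (x, snd p i)) < 1 / Suc n) \<and>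
          (\<forall>y. \<exists>i k. y \<in> fst p i k)" for n :: nat
  proof (rule PECP_decomposition[OF assms, of "1 / Suc n"])
    fix D :: "'b set \<Rightarrow> nat \<Rightarrow> 'b set" and y0 :: "'b set \<Rightarrow> 'b"
    assume D: "\<And>i k. closed (D i k)" "\<And>k. uniformly_separated (1 / Suc k) (\<lambda>i. D i k)"
      "\<And>i k y g. y \<in> D i k \<Longrightarrow> g \<in> {\<lambda>y. f (x, y) | x. True} \<Longrightarrow> dist (g y) (g (y0 i)) < 1 / Suc n"
      "\<And>y. \<exists>i k. y \<in> D i k"
    have near: "dist (f (x, y)) (f (x, y0 i)) < 1 / Suc n" if "y \<in> D i k" for i k x y
      using D(3)[OF that, of "\<lambda>y. f (x, y)"] by auto
    show ?thesis
      using D(1,2,4) near by (intro exI[of _ "(D, y0)"]) (simp only: fst_conv snd_conv, blast)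
  qed simp
  then have "\<forall>n. \<exists>p :: ('b set \<Rightarrow> nat \<Rightarrow> 'b set) \<times> ('b set \<Rightarrow> 'b).
          (\<forall>i k. closed (fst p i k)) \<and> (\<forall>k. uniformly_separated (1 / Suc k) (\<lambda>i. fst p i k)) \<and>
          (\<forall>i k x y. y \<in> fst p i k \<longrightarrow> dist (f (x, y)) (f (x, snd p i)) < 1 / Suc n) \<and>
          (\<forall>y. \<exists>i k. y \<in> fst p i k)"
    by blast
  from choice[OF this] obtain P :: "nat \<Rightarrow> ('b set \<Rightarrow> nat \<Rightarrow> 'b set) \<times> ('b set \<Rightarrow> 'b)" where P: "\<forall>n.
          (\<forall>i k. closed (fst (P n) i k)) \<and> (\<forall>k. uniformly_separated (1 / Suc k) (\<lambda>i. fst (P n) i k)) \<and>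
          (\<forall>i k x y. y \<in> fst (P n) i k \<longrightarrow> dist (f (x, y)) (f (x, snd (P n) i)) < 1 / Suc n) \<and>
          (\<forall>y. \<exists>i k. y \<in> fst (P n) i k)"
    by blast
  show ?thesis
    by (rule that[of "\<lambda>n. fst (P n)" "\<lambda>n. snd (P n)"]) (use P in blast)+
qed

lemma additive_class_open:
  fixes A :: "'a::metric_space set"
  assumes "Well_order r" "Field r \<noteq> {}" "open A"
  shows "additive_class r A"
  using assms by (simp add: additive_class_iff_sigma_class sigma_class_open)

lemma additive_class_UN:
  fixes A :: "nat \<Rightarrow> 'a::metric_space set"
  assumes "Well_order r" "Field r \<noteq> {}" "\<And>n. additive_class r (A n)"
  shows "additive_class r (\<Union>n. A n)"
  using assms by (simp add: additive_class_iff_sigma_class countable_union_of_UN)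

lemma additive_class_Times_closed:
  fixes A :: "'a::metric_space set" and K :: "'b::metric_space set"
  assumes r: "Well_order r" and ne: "Field r \<noteq> {}" and "additive_class r A" "closed K"
  shows "additive_class r (A \<times> K)"
proof -
  have "sigma_class r (Field r) (fst -` A :: ('a \<times> 'b) set)"
    using assms(3) unfolding additive_class_iff_sigma_class[OF r ne]
    by (rule sigma_class_vimage) (rule add_class_at_vimage[OF r continuous_on_fst[OF continuous_on_id]])
  then have "sigma_class r (Field r) (fst -` A \<inter> snd -` K :: ('a \<times> 'b) set)"
    by (rule sigma_class_Int_closed[OF r]) (rule closed_vimage_snd[OF assms(4)])
  moreover have "fst -` A \<inter> snd -` K = A \<times> K"
    by auto
  ultimately show ?thesis
    by (simp add: additive_class_iff_sigma_class[OF r ne])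
qed

lemma uniformly_separated_Times:
  fixes D :: "'k \<Rightarrow> 'b::metric_space set" and A :: "'k \<Rightarrow> 'a::metric_space set"
  assumes "uniformly_separated \<delta> D"
  shows "uniformly_separated \<delta> (\<lambda>i. A i \<times> D i)"
  unfolding uniformly_separated_def
proof (intro allI impI)
  fix i j and s t :: "'a \<times> 'b"
  assume "i \<noteq> j" "s \<in> A i \<times> D i" "t \<in> A j \<times> D j"
  then have "\<delta> \<le> dist (snd s) (snd t)"
    using assms unfolding uniformly_separated_def by auto
  also have "\<dots> \<le> dist s t"
    by (rule dist_snd_le)
  finally show "\<delta> \<le> dist s t" .
qed

lemma in_open_iff_infdist_Compl_pos:
  fixes V :: "'a::metric_space set"
  assumes "open V" "V \<noteq> UNIV"
  shows "z \<in> V \<longleftrightarrow> 0 < infdist z (- V)"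
proof -
  have "z \<in> - V \<longleftrightarrow> infdist z (- V) = 0"
    by (rule in_closed_iff_infdist_zero) (use assms in auto)
  then show ?thesis
    using infdist_nonneg[of z "- V"] by auto
qed

lemma vimage_open_eq_Union_Times:
  fixes f :: "'a \<times> 'b \<Rightarrow> 'c::metric_space"
  assumes "open V" "V \<noteq> UNIV"
    and near: "\<And>n i k x y. y \<in> D n i k \<Longrightarrow> dist (f (x, y)) (f (x, y0 n i)) < 1 / Suc n"
    and cover: "\<And>n y. \<exists>i k. y \<in> D n i k"
  shows "f -` V = (\<Union>n. \<Union>k. \<Union>i. {x. 1 / Suc n < infdist (f (x, y0 n i)) (- V)} \<times> D n i k)"
proof -
  note inV = in_open_iff_infdist_Compl_pos[OF assms(1,2)]
  show ?thesis
  proof (intro set_eqI iffI)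
    fix p
    assume "p \<in> f -` V"
    obtain x y where p: "p = (x, y)"
      by fastforce
    have "0 < infdist (f (x, y)) (- V) / 2"
      using \<open>p \<in> f -` V\<close> inV p by simp
    then obtain n where n: "1 / Suc n < infdist (f (x, y)) (- V) / 2"
      using nat_approx_posE by blast
    obtain i k where "y \<in> D n i k"
      using cover by blast
    moreover have "infdist (f (x, y)) (- V) \<le> infdist (f (x, y0 n i)) (- V) + dist (f (x, y)) (f (x, y0 n i))"
      by (rule infdist_triangle)
    ultimately have "1 / Suc n < infdist (f (x, y0 n i)) (- V)"
      using near[of y n i k x] n by linarith
    with \<open>y \<in> D n i k\<close> show "p \<in> (\<Union>n. \<Union>k. \<Union>i. {x. 1 / Suc n < infdist (f (x, y0 n i)) (- V)} \<times> D n i k)"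
      using p by blast
  next
    fix p
    assume "p \<in> (\<Union>n. \<Union>k. \<Union>i. {x. 1 / Suc n < infdist (f (x, y0 n i)) (- V)} \<times> D n i k)"
    then obtain n k i x y where p: "p = (x, y)" "y \<in> D n i k"
      and far: "1 / Suc n < infdist (f (x, y0 n i)) (- V)"
      by blast
    have "infdist (f (x, y0 n i)) (- V) \<le> infdist (f (x, y)) (- V) + dist (f (x, y0 n i)) (f (x, y))"
      by (rule infdist_triangle)
    then have "0 < infdist (f (x, y)) (- V)"
      using near[OF p(2), of x] far by (simp add: dist_commute)
    then show "p \<in> f -` V"
      using inV p(1) by simp
  qed
qed

lemma additive_class_vimage_open:
  fixes f :: "('a::metric_space \<times> 'b::metric_space) \<Rightarrow> 'c::metric_space"
  assumes r: "Well_order r" and cf: "countable (Field r)" and ne: "Field r \<noteq> {}"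
    and "PECP {(\<lambda>y. f (x, y)) | x. True}" and "\<And>y. borel_class r (\<lambda>x. f (x, y))"
    and "open V" "V \<noteq> UNIV"
  shows "additive_class r (f -` V)"
proof (rule PECP_sections_decomposition[OF assms(4)])
  fix D :: "nat \<Rightarrow> 'b set \<Rightarrow> nat \<Rightarrow> 'b set" and y0 :: "nat \<Rightarrow> 'b set \<Rightarrow> 'b"
  assume D: "\<And>n i k. closed (D n i k)" "\<And>n k. uniformly_separated (1 / Suc k) (\<lambda>i. D n i k)"
    "\<And>n i k x y. y \<in> D n i k \<Longrightarrow> dist (f (x, y)) (f (x, y0 n i)) < 1 / Suc n"
    "\<And>n y. \<exists>i k. y \<in> D n i k"
  have "open {z. 1 / Suc n < infdist z (- V)}" for n
    by (intro open_Collect_less continuous_on_const continuous_on_infdist continuous_on_id)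
  then have "additive_class r ((\<lambda>x. f (x, y0 n i)) -` {z. 1 / Suc n < infdist z (- V)})" for n i
    using assms(5) unfolding borel_class_def by blast
  then have "additive_class r {x. 1 / Suc n < infdist (f (x, y0 n i)) (- V)}" for n i
    by (simp add: vimage_def)
  then have "additive_class r (\<Union>i. {x. 1 / Suc n < infdist (f (x, y0 n i)) (- V)} \<times> D n i k)" for n k
    by (intro additive_class_Union_separated[OF r cf ne _ uniformly_separated_Times[OF D(2)]]
        additive_class_Times_closed[OF r ne] D(1)) simp
  then have "additive_class r (\<Union>n. \<Union>k. \<Union>i. {x. 1 / Suc n < infdist (f (x, y0 n i)) (- V)} \<times> D n i k)"
    by (intro additive_class_UN[OF r ne])
  moreover have "f -` V = (\<Union>n. \<Union>k. \<Union>i. {x. 1 / Suc n < infdist (f (x, y0 n i)) (- V)} \<times> D n i k)"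
    using assms(6,7) D(3,4) by (rule vimage_open_eq_Union_Times)
  ultimately show ?thesis
    by simp
qed

theorem corollary3p20:
  fixes f :: "('a::metric_space \<times> 'b::metric_space) \<Rightarrow> 'c::metric_space"
    and r :: "'i rel"
  assumes "Well_order r"
    and "countable (Field r)"
    and "Field r \<noteq> {}"
    and "PECP {(\<lambda>y. f (x, y)) | x. True}"
    and "\<forall>y. borel_class r (\<lambda>x. f (x, y))"
  shows "borel_class r f"
  unfolding borel_class_def
proof (intro allI impI)
  fix V :: "'c set"
  assume "open V"
  show "additive_class r (f -` V)"
  proof (cases "V = UNIV")
    case True
    then show ?thesis
      by (simp add: additive_class_open[OF assms(1,3)])
  next
    case False
    then show ?thesis
      using additive_class_vimage_open[OF assms(1-4) _ \<open>open V\<close>] assms(5) by blast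
  qed
qed

end
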